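(* For $1\le m\le n$, $m\,E_m\!\left[\frac1\ell\right]+\sum_{j=1}^{m-1}E_m\!\left[\frac{\tau_j}{\ell}\right]=1$.
   Context: $\mathbf X=\{X_1,\dots,X_n\}$ with the uniform measure. $\mathcal X_m$ is the set of finite sequences $\chi=(\chi_1,\dots,\chi_\ell)$ of elements of $\mathbf X$ having exactly $m$ distinct entries and with $\chi_\ell$ different from all earlier entries; $\ell(\chi)$ is its length and $\chi$ has probability $n^{-\ell(\chi)}$; $E_m[f]=\sum_{\chi\in\mathcal X_m}f(\chi)n^{-\ell(\chi)}$. For $0\le j\le m$, $t_j(\chi)$ is the least $t\ge0$ with $|\{\chi_1,\dots,\chi_t\}|=j$, and $\tau_j(\chi)=t_{j+1}(\chi)-t_j(\chi)-1$ for $1\le j\le m-1$. *)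

theory Defs
  imports "HOL-Analysis.Analysis"
begin

text \<open>The ground set X = {X_1,...,X_n} is modelled as {..<n} :: nat set.
  seqs n m is the set X_m of finite sequences over X with exactly m distinct
  entries whose last entry differs from all earlier entries.\<close>
definition seqs :: "nat \<Rightarrow> nat \<Rightarrow> nat list set" where
  "seqs n m = {xs. set xs \<subseteq> {..<n} \<and> card (set xs) = m \<and> xs \<noteq> []
                  \<and> last xs \<notin> set (butlast xs)}"

definition Em :: "nat \<Rightarrow> nat \<Rightarrow> (nat list \<Rightarrow> real) \<Rightarrow> real" where
  "Em n m f = infsum (\<lambda>xs. f xs / real n ^ length xs) (seqs n m)"

definition tt :: "nat list \<Rightarrow> nat \<Rightarrow> nat" where
  "tt xs j = (LEAST t. card (set (take t xs)) = j)"

definition tau :: "nat list \<Rightarrow> nat \<Rightarrow> nat" where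
  "tau xs j = tt xs (Suc j) - tt xs j - 1"

end

theory Submission imports Defs begin

text \<open>For every \<open>\<chi> \<in> X\<^sub>m\<close> one has \<open>t\<^sub>1 = 1\<close> and \<open>t\<^sub>m = \<ell>\<close>, so the gaps telescope to
  \<open>m + \<Sum>\<tau>\<^sub>j = \<ell>\<close> and the integrand \<open>m/\<ell> + \<Sum>\<tau>\<^sub>j/\<ell>\<close> is identically \<open>1\<close>. The left-hand side
  is therefore \<open>E\<^sub>m[1]\<close>, the probability that a uniform random infinite sequence eventually
  shows \<open>m\<close> distinct values. At every finite horizon \<open>L\<close> the members of \<open>X\<^sub>m\<close> of length
  \<open>\<le> L\<close> together with the words of length \<open>L\<close> having fewer than \<open>m\<close> distinct values carry
  mass exactly \<open>1\<close>, and the latter mass is at most \<open>n((n-1)/n)\<^sup>L \<longrightarrow> 0\<close>.\<close>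

lemma card_set_take_mono: "t \<le> t' \<Longrightarrow> card (set (take t xs)) \<le> card (set (take t' xs))"
  by (meson card_mono finite_set set_take_subset_set_take)

lemma ex_card_set_take_eq: "j \<le> card (set xs) \<Longrightarrow> \<exists>t. card (set (take t xs)) = j"
proof (induction xs arbitrary: j rule: rev_induct)
  case Nil then show ?case by simp
next
  case (snoc x xs)
  show ?case
  proof (cases "j \<le> card (set xs)")
    case True
    then obtain t where t: "card (set (take t xs)) = j" using snoc.IH by blast
    have "take (min t (length xs)) (xs @ [x]) = take t xs" by (auto simp: min_def)
    then show ?thesis using t by metis
  next
    case False
    then have "j = card (set (xs @ [x]))" using snoc.prems
      by (simp add: card_insert_if split: if_splits)
    then show ?thesis by (metis take_all order_refl)
  qed
qed

lemma card_set_take_tt: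
  assumes "j \<le> card (set xs)"
  shows "card (set (take (tt xs j) xs)) = j"
  unfolding tt_def using ex_card_set_take_eq[OF assms] by (rule LeastI_ex)

lemma tt_le: "card (set (take t xs)) = j \<Longrightarrow> tt xs j \<le> t"
  unfolding tt_def by (rule Least_le)

lemma tt_strict_mono:
  assumes "j < j'" "j' \<le> card (set xs)"
  shows "tt xs j < tt xs j'"
proof (rule ccontr)
  assume "\<not> ?thesis"
  then have "card (set (take (tt xs j') xs)) \<le> card (set (take (tt xs j) xs))"
    by (intro card_set_take_mono) simp
  then show False using card_set_take_tt assms by fastforce
qed

lemma tt_one:
  assumes "xs \<noteq> []"
  shows "tt xs 1 = 1"
  unfolding tt_def
proof (rule Least_equality)
  show "card (set (take 1 xs)) = 1" using assms by (cases xs) auto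
  show "card (set (take t xs)) = 1 \<Longrightarrow> 1 \<le> t" for t
    by (cases t) auto
qed

lemma tt_card_set:
  assumes "xs \<noteq> []" "last xs \<notin> set (butlast xs)"
  shows "tt xs (card (set xs)) = length xs"
proof (rule antisym)
  show "tt xs (card (set xs)) \<le> length xs" by (rule tt_le) simp
  have "card (set (take t xs)) < card (set xs)" if "t < length xs" for t
  proof -
    have "set (take t xs) \<subseteq> set (butlast xs)"
      using that by (metis take_butlast set_take_subset)
    also have "\<dots> \<subset> set xs"
      using assms(2) last_in_set[OF assms(1)] by (intro psubsetI) (auto dest: in_set_butlastD)
    finally show ?thesis by (simp add: psubset_card_mono)
  qed
  then show "length xs \<le> tt xs (card (set xs))"
    using card_set_take_tt[of "card (set xs)" xs] by (metis less_irrefl not_le_imp_less)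
qed

lemma sum_tau_telescope:
  assumes "xs \<noteq> []" "1 \<le> k" "k \<le> card (set xs)"
  shows "(\<Sum>j=1..<k. tau xs j) + k = tt xs k"
  using assms(2,3)
proof (induction k rule: dec_induct)
  case base then show ?case using tt_one[OF assms(1)] by simp
next
  case (step k)
  then have "tt xs k < tt xs (Suc k)" by (intro tt_strict_mono) simp_all
  then show ?case using step by (simp add: tau_def)
qed

lemma seqs_sum_tau:
  assumes "xs \<in> seqs n m"
  shows "m + (\<Sum>j=1..m-1. tau xs j) = length xs"
proof -
  have xs: "xs \<noteq> []" "last xs \<notin> set (butlast xs)" "card (set xs) = m"
    using assms by (auto simp: seqs_def)
  then have "m \<ge> 1" unfolding xs(3)[symmetric] by (simp add: Suc_le_eq card_gt_0_iff)
  then have "{1..m-1} = {1..<m}" by auto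
  then show ?thesis
    using sum_tau_telescope[OF xs(1) \<open>m \<ge> 1\<close>] tt_card_set[OF xs(1,2)] xs(3) by simp
qed

lemma seqs_gap_ratio_le_1:
  assumes "xs \<in> seqs n m" "j \<in> {1..m-1}"
  shows "\<bar>real (tau xs j) / real (length xs)\<bar> \<le> 1"
proof -
  have "tau xs j \<le> (\<Sum>j=1..m-1. tau xs j)" using assms(2) by (intro member_le_sum) auto
  then have "tau xs j \<le> length xs" using seqs_sum_tau[OF assms(1)] by linarith
  then show ?thesis by (simp add: divide_le_eq_1)
qed

lemma seqs_gap_ratios_sum:
  assumes "xs \<in> seqs n m"
  shows "real m * (1 / real (length xs) / c) + (\<Sum>j=1..m-1. real (tau xs j) / real (length xs) / c)
    = 1 / c"
proof -
  have "real m * (1 / real (length xs) / c) + (\<Sum>j=1..m-1. real (tau xs j) / real (length xs) / c)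
      = (real m + (\<Sum>j=1..m-1. real (tau xs j))) / real (length xs) / c"
    by (simp only: add_divide_distrib sum_divide_distrib times_divide_eq_right mult_1_right)
  also have "real m + (\<Sum>j=1..m-1. real (tau xs j)) = real (length xs)"
    using arg_cong[OF seqs_sum_tau[OF assms], of real] by simp
  also have "length xs \<noteq> 0" using assms by (simp add: seqs_def)
  then have "real (length xs) / real (length xs) = 1" by simp
  finally show ?thesis .
qed

definition few_values_words :: "nat \<Rightarrow> nat \<Rightarrow> nat \<Rightarrow> nat list set" where
  "few_values_words n m L = {xs. set xs \<subseteq> {..<n} \<and> length xs = L \<and> card (set xs) < m}"

lemma finite_few_values_words: "finite (few_values_words n m L)"
  by (rule finite_subset[OF _ finite_lists_length_eq[of "{..<n}" L]])
    (auto simp: few_values_words_def)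

lemma finite_seqs_length_le: "finite {xs \<in> seqs n m. length xs \<le> L}"
  by (rule finite_subset[OF _ finite_lists_length_le[of "{..<n}" L]]) (auto simp: seqs_def)

lemma seqs_length_Suc_Un_few_values_words:
  "{xs \<in> seqs n m. length xs = Suc L} \<union> few_values_words n m (Suc L)
     = (\<lambda>(xs, x). xs @ [x]) ` (few_values_words n m L \<times> {..<n})"
proof (intro equalityI subsetI)
  fix ys assume ys: "ys \<in> {xs \<in> seqs n m. length xs = Suc L} \<union> few_values_words n m (Suc L)"
  then have "ys \<noteq> []" by (auto simp: few_values_words_def)
  then obtain xs x where yx: "ys = xs @ [x]" by (metis rev_exhaust)
  have "card (set xs) < m"
  proof (cases "ys \<in> seqs n m")
    case True
    then have "x \<notin> set xs" "card (insert x (set xs)) = m" by (auto simp: seqs_def yx)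
    then show ?thesis by simp
  next
    case False
    then have "card (insert x (set xs)) < m" using ys by (auto simp: few_values_words_def yx)
    moreover have "card (set xs) \<le> card (insert x (set xs))" by (simp add: card_mono subset_insertI)
    ultimately show ?thesis by simp
  qed
  moreover have "set xs \<subseteq> {..<n}" "x < n" "length xs = L"
    using ys by (auto simp: seqs_def few_values_words_def yx)
  ultimately show "ys \<in> (\<lambda>(xs, x). xs @ [x]) ` (few_values_words n m L \<times> {..<n})"
    using yx by (auto simp: few_values_words_def)
next
  fix ys assume "ys \<in> (\<lambda>(xs, x). xs @ [x]) ` (few_values_words n m L \<times> {..<n})"
  then obtain xs x where yx: "ys = xs @ [x]" and xs: "xs \<in> few_values_words n m L" and "x < n"
    by auto
  then have ys: "set ys \<subseteq> {..<n}" "length ys = Suc L" "card (set xs) < m"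
    by (auto simp: few_values_words_def)
  have "card (set ys) < m \<or> card (set ys) = m \<and> x \<notin> set xs"
    using ys(3) yx by (cases "x \<in> set xs") (auto simp: insert_absorb)
  then show "ys \<in> {xs \<in> seqs n m. length xs = Suc L} \<union> few_values_words n m (Suc L)"
    using ys yx by (auto simp: seqs_def few_values_words_def)
qed

lemma card_seqs_length_Suc:
  "card {xs \<in> seqs n m. length xs = Suc L} + card (few_values_words n m (Suc L))
     = n * card (few_values_words n m L)"
proof -
  have "finite {xs \<in> seqs n m. length xs = Suc L}"
    by (rule finite_subset[OF _ finite_seqs_length_le[of n m "Suc L"]]) auto
  moreover have "{xs \<in> seqs n m. length xs = Suc L} \<inter> few_values_words n m (Suc L) = {}"
    by (auto simp: seqs_def few_values_words_def)
  ultimately have "card {xs \<in> seqs n m. length xs = Suc L} + card (few_values_words n m (Suc L))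
      = card ({xs \<in> seqs n m. length xs = Suc L} \<union> few_values_words n m (Suc L))"
    by (simp add: card_Un_disjoint finite_few_values_words)
  also have "\<dots> = card ((\<lambda>(xs, x). xs @ [x]) ` (few_values_words n m L \<times> {..<n}))"
    by (simp only: seqs_length_Suc_Un_few_values_words)
  also have "\<dots> = card (few_values_words n m L \<times> {..<n})"
    by (rule card_image) (auto simp: inj_on_def)
  finally show ?thesis by (simp add: card_cartesian_product)
qed

lemma sum_weights_seqs_length_le:
  assumes "0 < n" "1 \<le> m"
  shows "(\<Sum>xs | xs \<in> seqs n m \<and> length xs \<le> L. 1 / real n ^ length xs)
           + real (card (few_values_words n m L)) / real n ^ L = 1"
proof (induction L)
  case 0
  have "{xs. xs \<in> seqs n m \<and> length xs \<le> 0} = {}" by (auto simp: seqs_def)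
  moreover have "few_values_words n m 0 = {[]}" using assms by (auto simp: few_values_words_def)
  ultimately show ?case by simp
next
  case (Suc L)
  let ?W = "\<lambda>L. \<Sum>xs | xs \<in> seqs n m \<and> length xs \<le> L. 1 / real n ^ length xs"
  let ?S = "{xs \<in> seqs n m. length xs = Suc L}"
  have split: "{xs. xs \<in> seqs n m \<and> length xs \<le> Suc L}
      = {xs. xs \<in> seqs n m \<and> length xs \<le> L} \<union> ?S" by auto
  have "finite ?S"
    by (rule finite_subset[OF _ finite_seqs_length_le[of n m "Suc L"]]) auto
  then have "?W (Suc L) = ?W L + real (card ?S) / real n ^ Suc L"
    unfolding split using finite_seqs_length_le[of n m L]
    by (subst sum.union_disjoint) auto
  then have "?W (Suc L) + real (card (few_values_words n m (Suc L))) / real n ^ Suc L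
      = ?W L + (real (card ?S) + real (card (few_values_words n m (Suc L)))) / real n ^ Suc L"
    by (simp add: add_divide_distrib)
  also have "\<dots> = ?W L + real (card (few_values_words n m L)) / real n ^ L"
    using arg_cong[OF card_seqs_length_Suc[of n m L], of real] assms(1) by simp
  finally show ?case using Suc.IH by simp
qed

lemma card_few_values_words_le:
  assumes "m \<le> n"
  shows "card (few_values_words n m L) \<le> n * (n - 1) ^ L"
proof -
  have "few_values_words n m L \<subseteq> (\<Union>a<n. {xs. set xs \<subseteq> {..<n} - {a} \<and> length xs = L})"
  proof
    fix xs assume xs: "xs \<in> few_values_words n m L"
    then have "set xs \<noteq> {..<n}" using assms by (auto simp: few_values_words_def)
    then show "xs \<in> (\<Union>a<n. {xs. set xs \<subseteq> {..<n} - {a} \<and> length xs = L})"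
      using xs by (auto simp: few_values_words_def)
  qed
  then have "card (few_values_words n m L)
      \<le> card (\<Union>a<n. {xs. set xs \<subseteq> {..<n} - {a} \<and> length xs = L})"
    by (intro card_mono) (auto intro: finite_lists_length_eq)
  also have "\<dots> \<le> (\<Sum>a<n. card {xs. set xs \<subseteq> {..<n} - {a} \<and> length xs = L})"
    by (rule card_UN_le) simp
  also have "\<dots> = n * (n - 1) ^ L"
    by (simp add: card_lists_length_eq)
  finally show ?thesis .
qed

lemma few_values_words_fraction_tendsto_0:
  assumes "1 \<le> m" "m \<le> n"
  shows "(\<lambda>L. real (card (few_values_words n m L)) / real n ^ L) \<longlonglongrightarrow> 0"
proof (rule Lim_null_comparison)
  have n: "0 < n" using assms by simp
  show "\<forall>\<^sub>F L in sequentially.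
      norm (real (card (few_values_words n m L)) / real n ^ L) \<le> real n * ((real n - 1) / real n) ^ L"
  proof (intro always_eventually allI)
    fix L
    have "real (card (few_values_words n m L)) \<le> real (n * (n - 1) ^ L)"
      using card_few_values_words_le[OF assms(2), of L] by (simp only: of_nat_le_iff)
    also have "\<dots> = real n * (real n - 1) ^ L" using n by simp
    finally have "real (card (few_values_words n m L)) \<le> real n * (real n - 1) ^ L" .
    then show "norm (real (card (few_values_words n m L)) / real n ^ L)
        \<le> real n * ((real n - 1) / real n) ^ L"
      using n by (simp add: power_divide divide_right_mono)
  qed
  have "(\<lambda>L. ((real n - 1) / real n) ^ L) \<longlonglongrightarrow> 0"
    by (rule LIMSEQ_power_zero) (use n in auto)
  then show "(\<lambda>L. real n * ((real n - 1) / real n) ^ L) \<longlonglongrightarrow> 0"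
    by (simp add: tendsto_mult_right_zero)
qed

lemma sum_weights_seqs_le_1:
  assumes "0 < n" "1 \<le> m" "finite B" "B \<subseteq> seqs n m"
  shows "(\<Sum>xs\<in>B. 1 / real n ^ length xs) \<le> 1"
proof -
  define L where "L = Max (insert 0 (length ` B))"
  have "B \<subseteq> {xs. xs \<in> seqs n m \<and> length xs \<le> L}"
    using assms(3,4) by (auto simp: L_def)
  then have "(\<Sum>xs\<in>B. 1 / real n ^ length xs)
      \<le> (\<Sum>xs | xs \<in> seqs n m \<and> length xs \<le> L. 1 / real n ^ length xs)"
    using finite_seqs_length_le by (intro sum_mono2) auto
  also have "\<dots> \<le> 1"
  proof -
    have "0 \<le> real (card (few_values_words n m L)) / real n ^ L" by simp
    then show ?thesis using sum_weights_seqs_length_le[OF assms(1,2), of L] by linarith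
  qed
  finally show ?thesis .
qed

lemma has_sum_weights_seqs:
  assumes "1 \<le> m" "m \<le> n"
  shows "((\<lambda>xs. 1 / real n ^ length xs) has_sum 1) (seqs n m)"
proof -
  let ?w = "\<lambda>xs. 1 / real n ^ length xs"
  have n: "0 < n" using assms by simp
  have summable: "?w summable_on seqs n m"
    by (rule nonneg_bdd_above_summable_on)
      (auto intro!: bdd_aboveI2[where M = 1] sum_weights_seqs_le_1 n assms(1))
  have "infsum ?w (seqs n m) \<le> 1"
    using summable sum_weights_seqs_le_1[OF n assms(1)] by (rule infsum_le_finite_sums)
  moreover have "1 \<le> infsum ?w (seqs n m)"
  proof (rule LIMSEQ_le_const2)
    show "(\<lambda>L. \<Sum>xs | xs \<in> seqs n m \<and> length xs \<le> L. ?w xs) \<longlonglongrightarrow> 1"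
      using tendsto_diff[OF tendsto_const few_values_words_fraction_tendsto_0[OF assms], of 1]
        sum_weights_seqs_length_le[OF n assms(1)]
      by (simp add: eq_diff_eq[symmetric])
    show "\<exists>N. \<forall>L\<ge>N. (\<Sum>xs | xs \<in> seqs n m \<and> length xs \<le> L. ?w xs) \<le> infsum ?w (seqs n m)"
      using summable finite_seqs_length_le by (auto intro!: finite_sum_le_infsum)
  qed
  ultimately show ?thesis
    using summable by (metis antisym has_sum_infsum)
qed

lemma has_sum_Em:
  assumes "1 \<le> m" "m \<le> n" "\<And>xs. xs \<in> seqs n m \<Longrightarrow> \<bar>f xs\<bar> \<le> C"
  shows "((\<lambda>xs. f xs / real n ^ length xs) has_sum Em n m f) (seqs n m)"
proof -
  have "(\<lambda>xs. C * (1 / real n ^ length xs)) summable_on seqs n m"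
    using has_sum_weights_seqs[OF assms(1,2)] by (intro summable_on_cmult_right) (rule has_sum_imp_summable)
  then have "(\<lambda>xs. norm (f xs / real n ^ length xs)) summable_on seqs n m"
    by (rule Infinite_Sum.abs_summable_on_comparison_test') (use assms(3) in \<open>auto simp: divide_right_mono\<close>)
  then have "(\<lambda>xs. f xs / real n ^ length xs) summable_on seqs n m"
    by (rule abs_summable_summable)
  then show ?thesis
    unfolding Em_def by (rule has_sum_infsum)
qed

lemma has_sum_sum:
  fixes f :: "'i \<Rightarrow> 'a \<Rightarrow> 'b::topological_comm_monoid_add"
  assumes "finite I" "\<And>i. i \<in> I \<Longrightarrow> (f i has_sum s i) A"
  shows "((\<lambda>x. \<Sum>i\<in>I. f i x) has_sum (\<Sum>i\<in>I. s i)) A"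
  using assms by (induction I rule: finite_induct) (auto intro: has_sum_add)

theorem mainTheorem10:
  fixes n m :: nat
  assumes "1 \<le> m" and "m \<le> n"
  shows "real m * Em n m (\<lambda>xs. 1 / real (length xs))
         + (\<Sum>j=1..m-1. Em n m (\<lambda>xs. real (tau xs j) / real (length xs))) = 1"
proof -
  let ?F = "\<lambda>xs. real m * (1 / real (length xs) / real n ^ length xs)
    + (\<Sum>j=1..m-1. real (tau xs j) / real (length xs) / real n ^ length xs)"
  have "\<bar>1 / real (length xs)\<bar> \<le> 1" for xs :: "nat list"
    by (cases "length xs") auto
  then have "(?F has_sum (real m * Em n m (\<lambda>xs. 1 / real (length xs))
      + (\<Sum>j=1..m-1. Em n m (\<lambda>xs. real (tau xs j) / real (length xs))))) (seqs n m)"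
    using seqs_gap_ratio_le_1
    by (intro has_sum_add has_sum_cmult_right has_sum_sum has_sum_Em[OF assms, where C = 1]) auto
  moreover have "(?F has_sum 1) (seqs n m)"
  proof (rule has_sum_cong[THEN iffD2])
    show "?F xs = 1 / real n ^ length xs" if "xs \<in> seqs n m" for xs
      using that by (rule seqs_gap_ratios_sum)
  qed (rule has_sum_weights_seqs[OF assms])
  ultimately show ?thesis by (rule has_sum_unique)
qed

end
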